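(* Let $\{P_n\}$, $\{R_n\}$, $\{S_n\}$ be Brenke polynomial sets with exponential generating functions $A_1(t)B_1(xt)$, $A_2(t)B_2(xt)$, $A_3(t)B_3(xt)$, where $A_i(t)=\sum_ka^{(i)}_kt^k$, $B_i(t)=\sum_kb^{(i)}_kt^k$, $a^{(i)}_0b^{(i)}_k\neq0$. Write $1/A_1(t)=\sum_{n\ge0}\widehat a^{(1)}_nt^n$ and set $\widehat a^{(1)}_{-n}=0$ for $n\ge1$. Then the coefficients in $R_i(x)S_j(x)=\sum_{k=0}^{i+j}L_{ij}(k)P_k(x)$ are $$L_{ij}(k)=\frac{i!\,j!}{k!}\sum_{n=0}^i\sum_{m=0}^j\frac{b^{(2)}_nb^{(3)}_m}{b^{(1)}_{n+m}}\,a^{(2)}_{i-n}a^{(3)}_{j-m}\,\widehat a^{(1)}_{n+m-k},\qquad k=0,1,\dots,i+j.$$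
   Context: A Brenke polynomial set is a sequence of polynomials $P_n$ with $\deg P_n=n$ generated as formal power series in $t$ by $A(t)B(xt)=\sum_{n\ge0}P_n(x)t^n/n!$, where $A(0)\ne0$ and all Taylor coefficients of $B$ are nonzero. *)

theory Defs
  imports "HOL-Computational_Algebra.Polynomial" "HOL-Computational_Algebra.Formal_Power_Series"
begin

text \<open>Brenke polynomial set with generating function A(t)B(xt) = sum P_n(x) t^n/n!,
  where A(t) = sum a_k t^k and B(t) = sum b_k t^k.  The product A(t)B(xt) is taken as a
  formal power series in t whose coefficients are polynomials in x; B(xt) has t^k-coefficient
  b_k x^k.\<close>

definition brenke_gf :: "(nat \<Rightarrow> 'a::field_char_0) \<Rightarrow> (nat \<Rightarrow> 'a) \<Rightarrow> 'a poly fps" where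
  "brenke_gf a b = Abs_fps (\<lambda>k. [:a k:]) * Abs_fps (\<lambda>k. monom (b k) k)"

definition brenke_poly :: "(nat \<Rightarrow> 'a::field_char_0) \<Rightarrow> (nat \<Rightarrow> 'a) \<Rightarrow> nat \<Rightarrow> 'a poly" where
  "brenke_poly a b n = smult (fact n) (fps_nth (brenke_gf a b) n)"

definition brenke_cond :: "(nat \<Rightarrow> 'a::field_char_0) \<Rightarrow> (nat \<Rightarrow> 'a) \<Rightarrow> bool" where
  "brenke_cond a b \<longleftrightarrow> a 0 \<noteq> 0 \<and> (\<forall>k. b k \<noteq> 0)"

definition inv_coeff :: "(nat \<Rightarrow> 'a::field_char_0) \<Rightarrow> int \<Rightarrow> 'a" where
  "inv_coeff a n = (if n < 0 then 0 else fps_nth (inverse (Abs_fps a)) (nat n))"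

end

theory Submission
  imports Defs
begin

text \<open>Multiplying \<open>A(t) B(xt) = \<Sum>\<^sub>n P\<^sub>n(x) t\<^sup>n / n!\<close> by \<open>1/A(t)\<close> and comparing
  coefficients of \<open>t\<^sup>m\<close> expresses each monomial \<open>b\<^sub>m x\<^sup>m\<close> in the basis \<open>P\<^sub>k\<close>, the coefficient
  of \<open>P\<^sub>k\<close> being the \<open>t\<^sup>m\<^sup>-\<^sup>k\<close>-coefficient of \<open>1/A\<close> divided by \<open>k!\<close>.  Expanding \<open>R\<^sub>i S\<^sub>j\<close> into monomials
  \<open>x\<^sup>n\<^sup>+\<^sup>m\<close> and substituting these expansions yields the connection coefficients.\<close>

lemma smult_sum_right: "smult c (\<Sum>i\<in>S. f i) = (\<Sum>i\<in>S. smult c (f i))"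
  by (induct S rule: infinite_finite_induct) (auto simp: smult_add_right)

lemma const_poly_fps_mult:
  "Abs_fps (\<lambda>k. [:fps_nth f k:]) * Abs_fps (\<lambda>k. [:fps_nth g k:]) = Abs_fps (\<lambda>k. [:fps_nth (f * g) k:])"
  by (rule fps_ext) (simp add: fps_mult_nth mult_to_poly sum_to_poly mult.commute)

lemma brenke_gf_nth:
  "fps_nth (brenke_gf a b) n = (\<Sum>k=0..n. monom (a (n - k) * b k) k)"
proof -
  have "fps_nth (brenke_gf a b) n = (\<Sum>i=0..n. monom (a i * b (n - i)) (n - i))"
    by (simp add: brenke_gf_def fps_mult_nth smult_monom)
  also have "\<dots> = (\<Sum>k=0..n. monom (a (n - k) * b k) k)"
    by (subst sum.atLeastAtMost_rev) (auto intro!: sum.cong)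
  finally show ?thesis .
qed

lemma inverse_mult_brenke_gf:
  fixes a b :: "nat \<Rightarrow> 'a::field_char_0"
  assumes "a 0 \<noteq> 0"
  shows "Abs_fps (\<lambda>k. [:fps_nth (inverse (Abs_fps a)) k:]) * brenke_gf a b = Abs_fps (\<lambda>k. monom (b k) k)"
proof -
  have "inverse (Abs_fps a) * Abs_fps a = 1"
    using assms by (intro inverse_mult_eq_1) simp
  then have "Abs_fps (\<lambda>k. [:fps_nth (inverse (Abs_fps a)) k:]) * Abs_fps (\<lambda>k. [:a k:]) = 1"
    using const_poly_fps_mult[of "inverse (Abs_fps a)" "Abs_fps a"]
    by (simp add: fps_eq_iff)
  then show ?thesis
    by (simp add: brenke_gf_def mult.assoc[symmetric])
qed

lemma monom_eq_sum_brenke_poly: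
  fixes a b :: "nat \<Rightarrow> 'a::field_char_0"
  assumes "a 0 \<noteq> 0"
  shows "monom (b m) m = (\<Sum>k=0..m. smult (inv_coeff a (int m - int k) / fact k) (brenke_poly a b k))"
proof -
  define h where "h = fps_nth (inverse (Abs_fps a))"
  have "monom (b m) m = (\<Sum>i=0..m. [:h i:] * fps_nth (brenke_gf a b) (m - i))"
    using arg_cong[OF inverse_mult_brenke_gf[where a=a and b=b, OF assms], of "\<lambda>f. fps_nth f m"]
    by (simp add: fps_mult_nth h_def)
  also have "\<dots> = (\<Sum>k=0..m. [:h (m - k):] * fps_nth (brenke_gf a b) k)"
    by (subst sum.atLeastAtMost_rev) (auto intro!: sum.cong)
  also have "\<dots> = (\<Sum>k=0..m. smult (inv_coeff a (int m - int k) / fact k) (brenke_poly a b k))"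
    by (intro sum.cong) (auto simp: brenke_poly_def inv_coeff_def h_def nat_diff_distrib)
  finally show ?thesis .
qed

lemma monom_eq_sum_brenke_poly_upto:
  fixes a b :: "nat \<Rightarrow> 'a::field_char_0"
  assumes "a 0 \<noteq> 0" and "m \<le> N"
  shows "monom (b m) m = (\<Sum>k=0..N. smult (inv_coeff a (int m - int k) / fact k) (brenke_poly a b k))"
  unfolding monom_eq_sum_brenke_poly[where a=a and b=b, OF assms(1)]
  by (rule sum.mono_neutral_left) (use assms(2) in \<open>auto simp: inv_coeff_def\<close>)

theorem mainTheorem9:
  fixes a1 b1 a2 b2 a3 b3 :: "nat \<Rightarrow> 'a::field_char_0"
  assumes "brenke_cond a1 b1" and "brenke_cond a2 b2" and "brenke_cond a3 b3"
  shows "brenke_poly a2 b2 i * brenke_poly a3 b3 j =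
    (\<Sum>k = 0..i+j. smult
       (fact i * fact j / fact k *
        (\<Sum>n = 0..i. \<Sum>m = 0..j. b2 n * b3 m / b1 (n + m) * a2 (i - n) * a3 (j - m)
           * inv_coeff a1 (int (n + m) - int k)))
       (brenke_poly a1 b1 k))"
proof -
  have a10: "a1 0 \<noteq> 0" and b1: "\<And>k. b1 k \<noteq> 0"
    using assms(1) by (auto simp: brenke_cond_def)
  define c where "c n m = b2 n * b3 m / b1 (n + m) * a2 (i - n) * a3 (j - m)" for n m
  have "brenke_poly a2 b2 i * brenke_poly a3 b3 j =
     smult (fact i * fact j) (fps_nth (brenke_gf a2 b2) i * fps_nth (brenke_gf a3 b3) j)"
    by (simp add: brenke_poly_def mult.commute)
  also have "fps_nth (brenke_gf a2 b2) i * fps_nth (brenke_gf a3 b3) j =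
     (\<Sum>n=0..i. \<Sum>m=0..j. smult (c n m) (monom (b1 (n + m)) (n + m)))"
    unfolding brenke_gf_nth sum_product
    by (intro sum.cong refl) (simp add: mult_monom smult_monom c_def b1 mult_ac)
  also have "\<dots> = (\<Sum>n=0..i. \<Sum>m=0..j. \<Sum>k=0..i+j.
        smult (c n m * (inv_coeff a1 (int (n + m) - int k) / fact k)) (brenke_poly a1 b1 k))"
    by (intro sum.cong refl, subst monom_eq_sum_brenke_poly_upto[where a=a1 and b=b1 and N="i+j", OF a10])
       (auto simp: smult_sum_right)
  also have "\<dots> = (\<Sum>k=0..i+j. \<Sum>n=0..i. \<Sum>m=0..j.
        smult (c n m * (inv_coeff a1 (int (n + m) - int k) / fact k)) (brenke_poly a1 b1 k))"
    by (subst sum.swap, rule sum.cong[OF refl], subst sum.swap, rule refl)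
  finally show ?thesis
    by (simp add: smult_sum_right smult_sum sum_distrib_left c_def mult_ac)
qed

end
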